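(* Let $\mathcal{H}$ be a Hilbert space, $f,g\colon\mathcal{H}\to\mathbb{R}$ convex continuous, $\mathcal{C}_f=\arg\min f\neq\emptyset$, $f_\ast=\min f$, $r>0$ and $\mathcal{U}_r:=\{x: d(x,\mathcal{C}_f)\le r\}$. Then for every $x\in\mathcal{U}_r$ and every $\delta>0$, $$g(x)-f(x)\;\le\;\big(\|s_g-s_f|_{\mathcal{U}_r}+\delta\big)\,d(x,\mathcal{C}_f)\;+\;\frac{\|s_g-s_f|_{\mathcal{U}_r}}{\delta}\,\big(f(x)-f_\ast\big)\;+\;\|g-f|_{\mathcal{C}_f}.$$
   Context: $\partial f(x)=\{v: f(y)-f(x)\ge\langle v,y-x\rangle\ \forall y\}$ is the convex subdifferential and $s_f(x):=\operatorname{dist}(0,\partial f(x))$ the slope (similarly for $g$). For $\omega\colon\mathcal{H}\to\mathbb{R}$ and $\mathcal{U}\subset\mathcal{H}$, $\|\omega|_{\mathcal{U}}:=\sup_{x\in\mathcal{U}}\max\{\omega(x),0\}$. *)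

theory Defs
  imports "HOL-Analysis.Analysis"
begin

definition subdiff :: "('a::real_inner \<Rightarrow> real) \<Rightarrow> 'a \<Rightarrow> 'a set" where
  "subdiff f x = {v. \<forall>y. f y - f x \<ge> inner v (y - x)}"

definition slope :: "('a::real_inner \<Rightarrow> real) \<Rightarrow> 'a \<Rightarrow> real" where
  "slope f x = infdist 0 (subdiff f x)"

definition possup :: "('a \<Rightarrow> real) \<Rightarrow> 'a set \<Rightarrow> ereal" where
  "possup w U = (SUP x\<in>U. ereal (max (w x) 0))"

end

(*
  Run the proximal point method for f from x with a small step l: x_{n+1} = prox_{l f}(x_n).
  Its subgradients w_{n+1} = (x_n - x_{n+1}) / l at x_{n+1} satisfy |w_{n+1}| <= |w_n| and
  f(x_n) - f(x_{n+1}) >= l |w_{n+1}|^2, and the iterates are Fejer monotone towards argmin f,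
  so they stay in U_r, where the slope of g exceeds that of f by at most S.  Stop at the first
  M with |w_M| <= delta.  Until then each step changes g - f by at most (S/delta) times the
  decrease of f, up to a telescoping error of order l; at x_M the slope of g is at most
  S + delta, so g(x_M) - f(x_M) <= (S + delta) d(x, argmin f) + sup (g - f) on argmin f.
  Letting l tend to 0 gives the estimate.  The same proximal construction, applied locally,
  shows that continuous convex functions on a Hilbert space have subgradients.
*)

theory Submission
  imports Defs
begin

section \<open>Subgradients and slopes\<close>

lemma subdiff_iff: "v \<in> subdiff f x \<longleftrightarrow> (\<forall>y. f x + inner v (y - x) \<le> f y)"
  by (auto simp: subdiff_def algebra_simps)

lemma subdiff_monotone:
  assumes "u \<in> subdiff f p" "v \<in> subdiff f q"
  shows "0 \<le> inner (u - v) (p - q)"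
proof -
  have "f p + inner u (q - p) \<le> f q" "f q + inner v (p - q) \<le> f p"
    using assms unfolding subdiff_iff by blast+
  then show ?thesis by (simp add: inner_diff_left inner_diff_right algebra_simps)
qed

lemma slope_le_norm: "v \<in> subdiff f x \<Longrightarrow> slope f x \<le> norm v"
  unfolding slope_def using infdist_le[of v _ 0] by simp

lemma le_mult_infdist:
  fixes A :: "'a::metric_space set"
  assumes "A \<noteq> {}" "0 \<le> K" "\<And>a. a \<in> A \<Longrightarrow> X \<le> K * dist x a + G"
  shows "X \<le> K * infdist x A + G"
proof (cases "K = 0")
  case True
  then show ?thesis using assms(1,3) by auto
next
  case False
  then have K: "0 < K" using assms(2) by simp
  have "(X - G) / K \<le> infdist x A"
    unfolding infdist_notempty[OF assms(1)]
  proof (rule cINF_greatest[OF assms(1)])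
    fix a assume "a \<in> A"
    then show "(X - G) / K \<le> dist x a"
      using assms(3)[of a] K by (simp add: pos_divide_le_eq mult.commute)
  qed
  then show ?thesis using K by (simp add: pos_divide_le_eq mult.commute)
qed

lemma diff_le_slope_mult_norm:
  assumes "subdiff g p \<noteq> {}"
  shows "g p - g q \<le> slope g p * norm (p - q)"
proof -
  have "g p - g q \<le> norm (p - q) * dist 0 w + 0" if "w \<in> subdiff g p" for w
  proof -
    have "g p - g q \<le> inner w (p - q)"
      using that unfolding subdiff_iff by (auto simp: inner_diff_right dest: spec[of _ q])
    also have "\<dots> \<le> norm w * norm (p - q)" by (rule norm_cauchy_schwarz)
    finally show ?thesis by (simp add: mult.commute)
  qed
  from le_mult_infdist[OF assms norm_ge_zero this] show ?thesis
    unfolding slope_def by (simp add: mult.commute)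
qed

lemma gap_le_of_slope_le:
  assumes g: "subdiff g p \<noteq> {}" "slope g p \<le> K" and "C \<noteq> {}"
    and "\<And>c. c \<in> C \<Longrightarrow> f c \<le> f p" "\<And>c. c \<in> C \<Longrightarrow> norm (p - c) \<le> norm (x - c)"
    and "\<And>c. c \<in> C \<Longrightarrow> g c - f c \<le> G"
  shows "g p - f p \<le> K * infdist x C + G"
proof (rule le_mult_infdist[OF \<open>C \<noteq> {}\<close>])
  have "0 \<le> slope g p" unfolding slope_def by (rule infdist_nonneg)
  then show "0 \<le> K" using g(2) by linarith
  fix c assume c: "c \<in> C"
  have "g p - g c \<le> slope g p * norm (p - c)" by (rule diff_le_slope_mult_norm[OF g(1)])
  also have "\<dots> \<le> K * dist x c"
    using g(2) assms(5)[OF c] \<open>0 \<le> slope g p\<close> by (intro mult_mono) (auto simp: dist_norm)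
  finally show "g p - f p \<le> K * dist x c + G" using assms(4,6)[OF c] by linarith
qed

lemma norm_diff_le_of_inner_nonpos:
  fixes p q c :: "'a::real_inner"
  assumes "inner (p - q) (c - q) \<le> 0"
  shows "norm (q - c) \<le> norm (p - c)"
proof -
  have "(norm (p - c))\<^sup>2 = (norm (p - q))\<^sup>2 + (norm (q - c))\<^sup>2 - 2 * inner (p - q) (c - q)"
    using dot_norm[of "p - q" "q - c"] by (simp add: inner_diff_right)
  then have "(norm (q - c))\<^sup>2 \<le> (norm (p - c))\<^sup>2"
    using assms by (smt (verit) zero_le_power2)
  then show ?thesis by (rule power2_le_imp_le) simp
qed

lemma norm_diff_sq_le_of_scaled_monotone:
  fixes u v :: "'a::real_inner"
  assumes "0 < s" "s \<le> t" "0 \<le> inner (u - v) (t *\<^sub>R v - s *\<^sub>R u)"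
  shows "(norm (u - v))\<^sup>2 \<le> (norm u)\<^sup>2 - (norm v)\<^sup>2"
proof -
  define A B P where "A = inner u u" and "B = inner v v" and "P = inner u v"
  have D: "(norm (u - v))\<^sup>2 = A + B - 2 * P"
    unfolding A_def B_def P_def power2_norm_eq_inner
    by (simp add: inner_diff_left inner_diff_right inner_commute)
  have "s * A + t * B \<le> (s + t) * P"
    using assms(3) unfolding A_def B_def P_def
    by (simp add: inner_diff_left inner_diff_right inner_commute algebra_simps)
  then have key: "(A + B - 2 * P) * (s + t) \<le> (t - s) * (A - B)"
    by (simp add: algebra_simps)
  have D0: "0 \<le> A + B - 2 * P" using D by (metis zero_le_power2)
  show ?thesis
  proof (cases "s = t")
    case True
    then have "(A + B - 2 * P) * (s + t) \<le> 0" using key by simp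
    then have "(norm (u - v))\<^sup>2 = 0"
      using D D0 assms(1) True by (simp add: mult_le_0_iff)
    then show ?thesis by simp
  next
    case False
    then have "0 < t - s" using assms(2) by simp
    then have AB: "0 \<le> A - B"
      using key D0 assms(1,2) by (smt (verit) mult_nonneg_nonneg zero_le_mult_iff)
    then have "(t - s) * (A - B) \<le> (s + t) * (A - B)"
      using assms(1) by (intro mult_right_mono) auto
    then have "(A + B - 2 * P) * (s + t) \<le> (A - B) * (s + t)"
      using key by (simp add: algebra_simps)
    then have "A + B - 2 * P \<le> A - B"
      using assms(1,2) by (simp add: mult_le_cancel_right)
    then show ?thesis unfolding D A_def B_def by (simp add: power2_norm_eq_inner)
  qed
qed

lemma norm_sq_midpoint_diff:
  fixes y z a :: "'a::real_inner"
  shows "(norm ((1/2) *\<^sub>R y + (1/2) *\<^sub>R z - a))\<^sup>2 =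
    ((norm (y - a))\<^sup>2 + (norm (z - a))\<^sup>2) / 2 - (norm (y - z))\<^sup>2 / 4"
proof -
  have "(1/2) *\<^sub>R y + (1/2) *\<^sub>R z - a = (1/2) *\<^sub>R ((y - a) + (z - a))"
    by (simp add: algebra_simps flip: scaleR_add_right)
  moreover have "y - z = (y - a) - (z - a)" by simp
  ultimately show ?thesis unfolding power2_norm_eq_inner
    by (simp add: inner_diff_left inner_diff_right inner_add_left inner_add_right inner_commute
        field_simps)
qed

lemma norm_sq_segment_diff:
  fixes y z a :: "'a::real_inner"
  shows "(norm (y + t *\<^sub>R (z - y) - a))\<^sup>2 =
    (norm (y - a))\<^sup>2 + 2 * t * inner (y - a) (z - y) + t\<^sup>2 * (norm (z - y))\<^sup>2"
proof -
  have "y + t *\<^sub>R (z - y) - a = (y - a) + t *\<^sub>R (z - y)" by (simp add: algebra_simps)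
  then show ?thesis unfolding power2_norm_eq_inner
    by (simp add: inner_add_left inner_add_right inner_commute algebra_simps power2_eq_square)
qed

section \<open>Proximal points in Hilbert space\<close>

lemma Cauchy_of_sq_dist_bound:
  fixes zs :: "nat \<Rightarrow> 'a::real_normed_vector"
  assumes "\<epsilon> \<longlonglongrightarrow> 0" and bound: "\<And>m n. (norm (zs m - zs n))\<^sup>2 \<le> \<epsilon> m + \<epsilon> n"
  shows "Cauchy zs"
proof (rule CauchyI)
  fix e :: real assume e: "0 < e"
  then obtain M where M: "\<And>n. M \<le> n \<Longrightarrow> \<bar>\<epsilon> n\<bar> < e\<^sup>2 / 2"
    using \<open>\<epsilon> \<longlonglongrightarrow> 0\<close> unfolding LIMSEQ_iff by (metis half_gt_zero real_norm_def
        diff_zero zero_less_power)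
  have "norm (zs m - zs n) < e" if "M \<le> m" "M \<le> n" for m n
  proof -
    have "(norm (zs m - zs n))\<^sup>2 < e\<^sup>2" using bound[of m n] M[OF that(1)] M[OF that(2)] by linarith
    then show ?thesis by (rule power2_less_imp_less) (use e in simp)
  qed
  then show "\<exists>M. \<forall>m\<ge>M. \<forall>n\<ge>M. norm (zs m - zs n) < e" by blast
qed

lemma prox_functional_midpoint:
  fixes \<phi> :: "'a::real_inner \<Rightarrow> real" and a y z :: 'a
  assumes \<phi>: "convex_on UNIV \<phi>" and l: "0 < l"
  defines "h \<equiv> \<lambda>z. \<phi> z + (norm (z - a))\<^sup>2 / (2*l)"
  shows "h ((1/2) *\<^sub>R y + (1/2) *\<^sub>R z) + (norm (y - z))\<^sup>2 / (8*l) \<le> (h y + h z) / 2"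
proof -
  let ?m = "(1/2) *\<^sub>R y + (1/2) *\<^sub>R z"
  have "\<phi> ?m \<le> (1/2) * \<phi> y + (1/2) * \<phi> z"
    using convex_onD[OF \<phi>, of "1/2" y z] by simp
  moreover define E F W where "E = (norm (y - a))\<^sup>2 / (2*l)" and "F = (norm (z - a))\<^sup>2 / (2*l)"
    and "W = (norm (y - z))\<^sup>2 / (8*l)"
  have "h ?m = \<phi> ?m + (E + F) / 2 - W"
    unfolding h_def norm_sq_midpoint_diff E_def F_def W_def using l by (simp add: field_simps)
  moreover have "h y = \<phi> y + E" "h z = \<phi> z + F" unfolding h_def E_def F_def by simp_all
  ultimately show ?thesis unfolding W_def[symmetric] by argo
qed

lemma prox_argmin_exists:
  fixes \<phi> :: "'a::{real_inner,complete_space} \<Rightarrow> real"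
  assumes K: "closed K" "convex K" "K \<noteq> {}"
    and \<phi>: "convex_on UNIV \<phi>" "continuous_on UNIV \<phi>"
    and lb: "\<And>z. z \<in> K \<Longrightarrow> m \<le> \<phi> z" and l: "0 < l"
  shows "\<exists>y\<in>K. \<forall>z\<in>K. \<phi> y + (norm (y - a))\<^sup>2 / (2*l) \<le> \<phi> z + (norm (z - a))\<^sup>2 / (2*l)"
proof -
  define h where "h z = \<phi> z + (norm (z - a))\<^sup>2 / (2*l)" for z
  have "bdd_below (h ` K)"
    using lb l unfolding h_def by (intro bdd_belowI2[of _ m]) (simp add: add_increasing2)
  define \<mu> where "\<mu> = Inf (h ` K)"
  have \<mu>_le: "\<mu> \<le> h z" if "z \<in> K" for z
    unfolding \<mu>_def using \<open>bdd_below (h ` K)\<close> that by (simp add: cInf_lower)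
  have "\<exists>z\<in>K. h z < \<mu> + inverse (real (Suc n))" for n
    using cInf_lessD[of "h ` K" "\<mu> + inverse (real (Suc n))"] K(3) unfolding \<mu>_def by auto
  then obtain zs where zs: "\<And>n. zs n \<in> K" "\<And>n. h (zs n) < \<mu> + inverse (real (Suc n))"
    by metis
  \<comment> \<open>By strong convexity of h, almost-minimizers of h are close.\<close>
  have close: "(norm (y - z))\<^sup>2 \<le> 4*l * (h y - \<mu>) + 4*l * (h z - \<mu>)"
    if "y \<in> K" "z \<in> K" for y z
  proof -
    have "(1/2) *\<^sub>R y + (1/2) *\<^sub>R z \<in> K" using convexD[OF K(2) that, of "1/2" "1/2"] by simp
    then have "\<mu> \<le> h ((1/2) *\<^sub>R y + (1/2) *\<^sub>R z)" by (rule \<mu>_le)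
    moreover have "h ((1/2) *\<^sub>R y + (1/2) *\<^sub>R z) + (norm (y - z))\<^sup>2 / (8*l) \<le> (h y + h z) / 2"
      using prox_functional_midpoint[OF \<phi>(1) l, where a = a and y = y and z = z]
      unfolding h_def .
    ultimately have "\<mu> + (norm (y - z))\<^sup>2 / (8*l) \<le> (h y + h z) / 2" by argo
    then show ?thesis using l by (simp add: field_simps)
  qed
  have "Cauchy zs"
  proof (rule Cauchy_of_sq_dist_bound)
    show "(\<lambda>n. 4*l * inverse (real (Suc n))) \<longlonglongrightarrow> 0"
      by (intro tendsto_mult_right_zero LIMSEQ_inverse_real_of_nat)
    fix m n
    have tail: "4*l * (h (zs k) - \<mu>) \<le> 4*l * inverse (real (Suc k))" for k
      using zs(2)[of k] l by (intro mult_left_mono) auto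
    show "(norm (zs m - zs n))\<^sup>2 \<le> 4*l * inverse (real (Suc m)) + 4*l * inverse (real (Suc n))"
      using close[OF zs(1) zs(1), of m n] tail[of m] tail[of n] by linarith
  qed
  then obtain y where y: "zs \<longlonglongrightarrow> y" using Cauchy_convergent_iff convergent_def by blast
  have "y \<in> K" using closed_sequentially[OF K(1) zs(1) y] .
  have "continuous_on UNIV h" unfolding h_def
    by (intro continuous_intros \<phi>(2)) (use l in auto)
  then have "(\<lambda>n. h (zs n)) \<longlonglongrightarrow> h y"
    using continuous_on_tendsto_compose[OF _ y, of UNIV h] by simp
  moreover have "(\<lambda>n. \<mu> + inverse (real (Suc n))) \<longlonglongrightarrow> \<mu> + 0"
    by (intro tendsto_intros LIMSEQ_inverse_real_of_nat)
  ultimately have "h y \<le> \<mu> + 0"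
    by (rule LIMSEQ_le) (use zs(2) less_imp_le in blast)
  then show ?thesis using \<open>y \<in> K\<close> \<mu>_le unfolding h_def by (metis add_0_right order_trans)
qed

lemma prox_subgradient:
  fixes \<phi> :: "'a::real_inner \<Rightarrow> real"
  assumes \<phi>: "convex_on UNIV \<phi>" and l: "0 < l" and \<epsilon>: "0 < \<epsilon>"
    and min: "\<And>z. z \<in> ball y \<epsilon> \<Longrightarrow>
      \<phi> y + (norm (y - a))\<^sup>2 / (2*l) \<le> \<phi> z + (norm (z - a))\<^sup>2 / (2*l)"
  shows "(1/l) *\<^sub>R (a - y) \<in> subdiff \<phi> y"
  unfolding subdiff_iff
proof
  fix z
  define N P where "N = (norm (z - y))\<^sup>2" and "P = inner (y - a) (z - y)"
  define A where "A = \<phi> z - \<phi> y + P / l"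
  have "0 \<le> A + t * N / (2*l)" if t: "0 < t" "t < min 1 (\<epsilon> / (norm (z - y) + 1))" for t
  proof -
    have "t * norm (z - y) \<le> t * (norm (z - y) + 1)" using t by simp
    also have "\<dots> < \<epsilon>" using t by (simp add: pos_less_divide_eq add_nonneg_pos)
    finally have "t * norm (z - y) < \<epsilon>" .
    then have "y + t *\<^sub>R (z - y) \<in> ball y \<epsilon>" using t by (simp add: dist_norm)
    from min[OF this] have "\<phi> y + (norm (y - a))\<^sup>2 / (2*l) \<le>
      (1 - t) * \<phi> y + t * \<phi> z + ((norm (y - a))\<^sup>2 + 2*t*P + t\<^sup>2*N) / (2*l)"
      using convex_onD[OF \<phi>, of t y z] t unfolding norm_sq_segment_diff N_def P_def
      by (simp add: algebra_simps)
    then have "0 \<le> t * (\<phi> z - \<phi> y) + (2*t*P + t\<^sup>2*N) / (2*l)"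
      unfolding add_divide_distrib by (simp add: algebra_simps)
    also have "\<dots> = t * (A + t * N / (2*l))"
      unfolding A_def using l by (simp add: field_simps power2_eq_square)
    finally have "0 \<le> t * (A + t * N / (2*l))" .
    then show ?thesis using t by (simp add: zero_le_mult_iff)
  qed
  then have "\<forall>\<^sub>F t in at_right 0. 0 \<le> A + t * N / (2*l)"
    unfolding eventually_at_right_field using \<epsilon>
    by (intro exI[of _ "min 1 (\<epsilon> / (norm (z - y) + 1))"]) (auto intro!: divide_pos_pos add_nonneg_pos)
  moreover have "((\<lambda>t. A + t * N / (2*l)) \<longlongrightarrow> A + 0 * N / (2*l)) (at_right 0)"
    using l by (intro tendsto_intros) auto
  ultimately have "0 \<le> A + 0 * N / (2*l)"
    by (intro tendsto_lowerbound[OF _ _ trivial_limit_at_right_real]) auto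
  moreover have "inner ((1/l) *\<^sub>R (a - y)) (z - y) = - P / l"
    unfolding P_def by (simp add: inner_diff_left)
  ultimately show "\<phi> y + inner ((1/l) *\<^sub>R (a - y)) (z - y) \<le> \<phi> z"
    unfolding A_def by simp
qed

lemma prox_map_exists:
  fixes \<phi> :: "'a::{real_inner,complete_space} \<Rightarrow> real"
  assumes \<phi>: "convex_on UNIV \<phi>" "continuous_on UNIV \<phi>" "bdd_below (range \<phi>)" and l: "0 < l"
  obtains P where "\<And>a. (1/l) *\<^sub>R (a - P a) \<in> subdiff \<phi> (P a)"
proof -
  obtain m where m: "\<And>z. m \<le> \<phi> z" using \<phi>(3) by (auto simp: bdd_below_def)
  have "\<exists>y. (1/l) *\<^sub>R (a - y) \<in> subdiff \<phi> y" for a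
  proof -
    obtain y where "\<forall>z. \<phi> y + (norm (y - a))\<^sup>2 / (2*l) \<le> \<phi> z + (norm (z - a))\<^sup>2 / (2*l)"
      using prox_argmin_exists[OF closed_UNIV convex_UNIV UNIV_not_empty \<phi>(1,2) m l] by blast
    then have "(1/l) *\<^sub>R (a - y) \<in> subdiff \<phi> y"
      by (intro prox_subgradient[OF \<phi>(1) l zero_less_one]) blast
    then show ?thesis ..
  qed
  then show ?thesis using that by metis
qed

section \<open>Existence of subgradients\<close>

lemma norm_subgradient_le:
  assumes v: "v \<in> subdiff g y" and r: "0 < r" and bnd: "\<And>z. z \<in> cball y r \<Longrightarrow> g z - g y \<le> M"
  shows "r * norm v \<le> M"
proof (cases "v = 0")
  case True
  then show ?thesis using bnd[of y] r by simp
next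
  case False
  define z where "z = y + (r / norm v) *\<^sub>R v"
  have "r * norm v = inner v (z - y)"
    using False unfolding z_def by (simp add: power2_norm_eq_inner[symmetric] power2_eq_square)
  also have "\<dots> \<le> g z - g y" using v unfolding subdiff_iff by (smt (verit))
  also have "\<dots> \<le> M" using False r by (intro bnd) (simp add: z_def dist_norm)
  finally show ?thesis .
qed

text \<open>A minimiser of the proximal functional over a ball lies well inside the ball, hence is a
  local minimiser and carries a subgradient of controlled norm.\<close>

lemma local_prox_subgradient:
  fixes g :: "'a::{real_inner,complete_space} \<Rightarrow> real"
  assumes g: "convex_on UNIV g" "continuous_on UNIV g" and \<rho>: "0 < \<rho>"
    and osc: "\<And>y. y \<in> cball x \<rho> \<Longrightarrow> \<bar>g y - g x\<bar> < 1"
    and l: "0 < l" "l \<le> \<rho>\<^sup>2 / 16"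
  obtains v where "v \<in> subdiff g (x - l *\<^sub>R v)" "norm v \<le> 4 / \<rho>"
proof -
  have "g x - 1 \<le> g z" if "z \<in> cball x \<rho>" for z using osc[OF that] by linarith
  then obtain y where y: "y \<in> cball x \<rho>" and y_min: "\<And>z. z \<in> cball x \<rho> \<Longrightarrow>
      g y + (norm (y - x))\<^sup>2 / (2*l) \<le> g z + (norm (z - x))\<^sup>2 / (2*l)"
    using prox_argmin_exists[OF closed_cball convex_cball _ g _ l(1), of x \<rho> "g x - 1" x] \<rho>
    by auto
  have near: "norm (y - x) < \<rho> / 2"
  proof -
    have "g y + (norm (y - x))\<^sup>2 / (2*l) \<le> g x"
      using y_min[of x] \<rho> by simp
    then have "(norm (y - x))\<^sup>2 / (2*l) < 1"
      using osc[OF y] by linarith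
    then have "(norm (y - x))\<^sup>2 < 2 * l"
      using l(1) by (simp add: divide_less_eq)
    also have "\<dots> < (\<rho> / 2)\<^sup>2"
      using l \<rho> by (simp add: power_divide)
    finally have "(norm (y - x))\<^sup>2 < (\<rho> / 2)\<^sup>2" .
    then show ?thesis by (rule power2_less_imp_less) (use \<rho> in simp)
  qed
  have cball_sub: "cball y (\<rho> / 2) \<subseteq> cball x \<rho>"
  proof
    fix z assume "z \<in> cball y (\<rho> / 2)"
    moreover have "dist x y < \<rho> / 2" using near by (simp add: dist_norm norm_minus_commute)
    ultimately show "z \<in> cball x \<rho>" using dist_triangle[of x z y] by simp
  qed
  define v where "v = (1/l) *\<^sub>R (x - y)"
  have v: "v \<in> subdiff g y"
    unfolding v_def
  proof (rule prox_subgradient[OF g(1) l(1)])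
    show "0 < \<rho> / 2" using \<rho> by simp
    fix z assume "z \<in> ball y (\<rho> / 2)"
    then have "z \<in> cball x \<rho>" by (rule subsetD[OF cball_sub subsetD[OF ball_subset_cball]])
    then show "g y + (norm (y - x))\<^sup>2 / (2*l) \<le> g z + (norm (z - x))\<^sup>2 / (2*l)"
      by (rule y_min)
  qed
  have "y = x - l *\<^sub>R v" unfolding v_def using l by simp
  moreover have "\<rho> / 2 * norm v \<le> 2"
  proof (rule norm_subgradient_le[OF v])
    fix z assume "z \<in> cball y (\<rho> / 2)"
    then show "g z - g y \<le> 2" using osc[OF subsetD[OF cball_sub]] osc[OF y] by fastforce
  qed (use \<rho> in simp)
  then have "norm v \<le> 4 / \<rho>" using \<rho> by (simp add: field_simps)
  ultimately show ?thesis using that v by blast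
qed

lemma subdiff_limit:
  assumes g: "continuous_on UNIV g"
    and "V \<longlonglongrightarrow> w" "Y \<longlonglongrightarrow> x" "\<And>n. V n \<in> subdiff g (Y n)"
  shows "w \<in> subdiff g x"
  unfolding subdiff_iff
proof
  fix z
  have "(\<lambda>n. g (Y n) + inner (V n) (z - Y n)) \<longlonglongrightarrow> g x + inner w (z - x)"
    by (intro tendsto_intros continuous_on_tendsto_compose[OF g assms(3)] assms(2,3)) auto
  then show "g x + inner w (z - x) \<le> g z"
    by (rule LIMSEQ_le_const2) (use assms(4) subdiff_iff in blast)
qed

lemma Cauchy_subgradients_of_resolvents:
  assumes l: "decseq l" "\<And>n. 0 < l n"
    and V: "\<And>n. V n \<in> subdiff g (x - l n *\<^sub>R V n)" and bnd: "\<And>n. norm (V n) \<le> B"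
  shows "Cauchy V"
proof -
  have gap: "(norm (V m - V n))\<^sup>2 \<le> (norm (V m))\<^sup>2 - (norm (V n))\<^sup>2" if "n \<le> m" for m n
  proof (rule norm_diff_sq_le_of_scaled_monotone[OF l(2)])
    show "l m \<le> l n" using l(1) that by (simp add: decseq_def)
    have "0 \<le> inner (V m - V n) ((x - l m *\<^sub>R V m) - (x - l n *\<^sub>R V n))"
      by (rule subdiff_monotone[OF V V])
    then show "0 \<le> inner (V m - V n) (l n *\<^sub>R V n - l m *\<^sub>R V m)" by simp
  qed
  have "incseq (\<lambda>n. (norm (V n))\<^sup>2)"
    unfolding incseq_def using gap by (smt (verit) zero_le_power2)
  moreover have "(norm (V n))\<^sup>2 \<le> B\<^sup>2" for n
    using bnd[of n] by (simp add: power_mono)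
  ultimately obtain L where L: "(\<lambda>n. (norm (V n))\<^sup>2) \<longlonglongrightarrow> L" "\<And>n. (norm (V n))\<^sup>2 \<le> L"
    using incseq_convergent by metis
  show "Cauchy V"
  proof (rule Cauchy_of_sq_dist_bound)
    show "(\<lambda>n. L - (norm (V n))\<^sup>2) \<longlonglongrightarrow> 0"
      using tendsto_diff[OF tendsto_const L(1), of L] by simp
    fix m n
    show "(norm (V m - V n))\<^sup>2 \<le> (L - (norm (V m))\<^sup>2) + (L - (norm (V n))\<^sup>2)"
    proof (cases "n \<le> m")
      case True
      then show ?thesis using gap[OF True] L(2)[of m] by linarith
    next
      case False
      then have "(norm (V n - V m))\<^sup>2 \<le> (norm (V n))\<^sup>2 - (norm (V m))\<^sup>2" by (intro gap) simp
      then show ?thesis using L(2)[of n] by (simp add: norm_minus_commute)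
    qed
  qed
qed

text \<open>As the step tends to 0, the subgradients produced by local proximal steps from x have
  increasing, bounded norms; this makes them converge, and the limit is a subgradient at x.\<close>

lemma subdiff_nonempty:
  fixes g :: "'a::{real_inner,complete_space} \<Rightarrow> real"
  assumes g: "convex_on UNIV g" "continuous_on UNIV g"
  shows "subdiff g x \<noteq> {}"
proof -
  obtain e where e: "0 < e" "\<And>y. dist y x < e \<Longrightarrow> dist (g y) (g x) < 1"
    using g(2) unfolding continuous_on_iff by (meson UNIV_I zero_less_one)
  define \<rho> where "\<rho> = e / 2"
  have \<rho>: "0 < \<rho>" unfolding \<rho>_def using e(1) by simp
  have osc: "\<bar>g y - g x\<bar> < 1" if "y \<in> cball x \<rho>" for y
    using e that unfolding \<rho>_def by (simp add: dist_commute dist_real_def)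
  define l where "l n = \<rho>\<^sup>2 / 16 * inverse (real (Suc n))" for n
  have l_pos: "0 < l n" for n unfolding l_def using \<rho> by simp
  have "l n \<le> \<rho>\<^sup>2 / 16" for n
    unfolding l_def by (rule mult_left_le) (auto simp: inverse_le_1_iff)
  then have "\<exists>v. v \<in> subdiff g (x - l n *\<^sub>R v) \<and> norm v \<le> 4 / \<rho>" for n
    by (meson local_prox_subgradient[OF g \<rho> osc l_pos])
  then obtain V where V: "\<And>n. V n \<in> subdiff g (x - l n *\<^sub>R V n)" "\<And>n. norm (V n) \<le> 4 / \<rho>"
    by metis
  have "decseq l"
    unfolding l_def decseq_def by (intro allI impI mult_left_mono le_imp_inverse_le) auto
  then have "Cauchy V" by (rule Cauchy_subgradients_of_resolvents[OF _ l_pos V])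
  then obtain w where w: "V \<longlonglongrightarrow> w"
    unfolding Cauchy_convergent_iff convergent_def by blast
  have "l \<longlonglongrightarrow> 0"
    unfolding l_def using tendsto_mult_right_zero[OF LIMSEQ_inverse_real_of_nat] by simp
  then have "(\<lambda>n. x - l n *\<^sub>R V n) \<longlonglongrightarrow> x - 0 *\<^sub>R w"
    by (intro tendsto_intros w)
  then have "w \<in> subdiff g x"
    using subdiff_limit[OF g(2) w _ V(1)] by simp
  then show ?thesis by blast
qed

section \<open>Proximal point sequences\<close>

locale proximal_sequence =
  fixes f :: "'a::real_inner \<Rightarrow> real" and l :: real and xs w :: "nat \<Rightarrow> 'a"
  assumes step_pos: "0 < l"
    and subgradient: "\<And>n. w n \<in> subdiff f (xs n)"
    and step: "\<And>n. xs n - xs (Suc n) = l *\<^sub>R w (Suc n)"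
begin

lemma norm_subgradient_Suc_le: "norm (w (Suc n)) \<le> norm (w n)"
proof -
  have "0 \<le> inner (w n - w (Suc n)) (xs n - xs (Suc n))"
    by (rule subdiff_monotone[OF subgradient subgradient])
  then have "inner (w (Suc n)) (w (Suc n)) \<le> inner (w n) (w (Suc n))"
    using step_pos unfolding step by (simp add: inner_diff_left zero_le_mult_iff)
  also have "\<dots> \<le> norm (w n) * norm (w (Suc n))" by (rule norm_cauchy_schwarz)
  finally have "norm (w (Suc n)) * norm (w (Suc n)) \<le> norm (w n) * norm (w (Suc n))"
    by (simp add: power2_norm_eq_inner[symmetric] power2_eq_square)
  then show ?thesis by (cases "w (Suc n) = 0") (auto simp: mult_le_cancel_right)
qed

lemma norm_subgradient_le_initial: "norm (w n) \<le> norm (w 0)"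
  by (induction n) (use norm_subgradient_Suc_le order_trans in blast)+

lemma descent: "l * (norm (w (Suc n)))\<^sup>2 \<le> f (xs n) - f (xs (Suc n))"
proof -
  have "f (xs (Suc n)) + inner (w (Suc n)) (xs n - xs (Suc n)) \<le> f (xs n)"
    using subgradient[of "Suc n"] unfolding subdiff_iff by blast
  then show ?thesis unfolding step by (simp add: power2_norm_eq_inner)
qed

lemma fejer_monotone:
  assumes "\<forall>y. f c \<le> f y"
  shows "norm (xs n - c) \<le> norm (xs 0 - c)"
proof (induction n)
  case (Suc n)
  have "f (xs (Suc n)) + inner (w (Suc n)) (c - xs (Suc n)) \<le> f c"
    using subgradient[of "Suc n"] unfolding subdiff_iff by blast
  then have "inner (w (Suc n)) (c - xs (Suc n)) \<le> 0" using assms[rule_format, of "xs (Suc n)"] by linarith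
  then have "inner (xs n - xs (Suc n)) (c - xs (Suc n)) \<le> 0"
    unfolding step using step_pos by (simp add: mult_nonneg_nonpos)
  then show ?case using Suc.IH norm_diff_le_of_inner_nonpos by (blast intro: order_trans)
qed simp

lemma exists_small_subgradient:
  assumes "bdd_below (range f)" "0 < \<delta>"
  shows "\<exists>n. norm (w n) \<le> \<delta>"
proof (rule ccontr)
  assume "\<nexists>n. norm (w n) \<le> \<delta>"
  then have large: "\<delta> < norm (w n)" for n by (meson not_le)
  have decrease: "real n * (l * \<delta>\<^sup>2) \<le> f (xs 0) - f (xs n)" for n
  proof (induction n)
    case (Suc n)
    have "l * \<delta>\<^sup>2 \<le> l * (norm (w (Suc n)))\<^sup>2"
      using large[of "Suc n"] assms(2) step_pos by (intro mult_left_mono power_mono) auto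
    then show ?case using Suc.IH descent[of n] by (simp add: algebra_simps)
  qed simp
  obtain m where m: "\<And>n. m \<le> f (xs n)" using assms(1) by (auto simp: bdd_below_def)
  obtain n where "(f (xs 0) - m) / (l * \<delta>\<^sup>2) < real n" using reals_Archimedean2 by blast
  then have "f (xs 0) - m < real n * (l * \<delta>\<^sup>2)"
    using step_pos assms(2) by (simp add: pos_divide_less_eq)
  then show False using decrease[of n] m[of n] by linarith
qed

lemma gap_step:
  assumes g: "subdiff g (xs n) \<noteq> {}" "slope g (xs n) \<le> slope f (xs n) + S"
    and S: "0 \<le> S" and \<delta>: "0 < \<delta>" "\<delta> < norm (w n)"
  shows "(g (xs n) - f (xs n)) - (g (xs (Suc n)) - f (xs (Suc n)))
    \<le> S / \<delta> * (f (xs n) - f (xs (Suc n)))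
      + (1 + S / \<delta>) * l * norm (w 0) * (norm (w n) - norm (w (Suc n)))"
proof -
  define a b U c where "a = norm (w n)" and "b = norm (w (Suc n))" and "U = norm (w 0)"
    and "c = S / \<delta>"
  define D where "D = f (xs n) - f (xs (Suc n))"
  have "b \<le> a" "a \<le> U" "0 \<le> b" "0 \<le> c"
    using norm_subgradient_Suc_le norm_subgradient_le_initial S \<delta>(1)
    unfolding a_def b_def U_def c_def by simp_all
  have "g (xs n) - g (xs (Suc n)) \<le> slope g (xs n) * norm (xs n - xs (Suc n))"
    by (rule diff_le_slope_mult_norm[OF g(1)])
  also have "\<dots> \<le> (a + S) * (l * b)"
  proof (rule mult_mono)
    show "slope g (xs n) \<le> a + S"
      using g(2) slope_le_norm[OF subgradient, of n] unfolding a_def by linarith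
    show "norm (xs n - xs (Suc n)) \<le> l * b"
      unfolding step b_def using step_pos by simp
  qed (use S \<open>0 \<le> b\<close> step_pos in \<open>auto simp: a_def\<close>)
  finally have g_step: "g (xs n) - g (xs (Suc n)) \<le> l*a*b + S*l*b" by (simp add: algebra_simps)
  \<comment> \<open>Since a > \<delta>, the slope excess S is paid for by the decrease of f.\<close>
  have "S*l*b*\<delta> \<le> S*l*b*a"
    using \<delta> S step_pos \<open>0 \<le> b\<close> unfolding a_def by (intro mult_left_mono) auto
  then have "S*l*b \<le> c*l*a*b"
    using \<delta>(1) unfolding c_def by (simp add: pos_le_divide_eq mult_ac)
  moreover have "(1 + c) * (l*b\<^sup>2) \<le> (1 + c) * D"
    using descent[of n] \<open>0 \<le> c\<close> unfolding b_def D_def by (intro mult_left_mono) auto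
  moreover have "(1 + c) * (l*b*(a - b)) \<le> (1 + c) * (l*U*(a - b))"
    using \<open>b \<le> a\<close> \<open>a \<le> U\<close> \<open>0 \<le> c\<close> step_pos
    by (intro mult_left_mono mult_right_mono) auto
  ultimately have "l*a*b + S*l*b - D \<le> c * D + (1 + c) * l * U * (a - b)"
    by (simp add: algebra_simps power2_eq_square)
  then show ?thesis using g_step unfolding a_def b_def U_def c_def D_def by linarith
qed

lemma gap_telescope:
  assumes g: "\<And>n. subdiff g (xs n) \<noteq> {}" "\<And>n. slope g (xs n) \<le> slope f (xs n) + S"
    and S: "0 \<le> S" and \<delta>: "0 < \<delta>" and large: "\<And>n. n < M \<Longrightarrow> \<delta> < norm (w n)"
  shows "g (xs 0) - f (xs 0) \<le> (g (xs M) - f (xs M)) + S / \<delta> * (f (xs 0) - f (xs M))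
    + (1 + S / \<delta>) * l * norm (w 0) * (norm (w 0) - norm (w M))"
  using large
proof (induction M)
  case (Suc M)
  have "(g (xs M) - f (xs M)) - (g (xs (Suc M)) - f (xs (Suc M)))
    \<le> S / \<delta> * (f (xs M) - f (xs (Suc M)))
      + (1 + S / \<delta>) * l * norm (w 0) * (norm (w M) - norm (w (Suc M)))"
    using gap_step[OF g S \<delta> Suc.prems] by simp
  moreover have "g (xs 0) - f (xs 0) \<le> (g (xs M) - f (xs M)) + S / \<delta> * (f (xs 0) - f (xs M))
    + (1 + S / \<delta>) * l * norm (w 0) * (norm (w 0) - norm (w M))"
    using Suc by simp
  ultimately show ?case unfolding right_diff_distrib by linarith
qed simp

lemma gap_estimate:
  assumes g: "\<And>n. subdiff g (xs n) \<noteq> {}"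
    and C: "C = {z. \<forall>y. f z \<le> f y}" "C \<noteq> {}" and \<delta>: "0 < \<delta>" and S: "0 \<le> S"
    and slope_gap: "\<And>u. infdist u C \<le> infdist (xs 0) C \<Longrightarrow> slope g u - slope f u \<le> S"
    and G: "\<And>c. c \<in> C \<Longrightarrow> g c - f c \<le> G"
  shows "g (xs 0) - f (xs 0) \<le> (S + \<delta>) * infdist (xs 0) C + S / \<delta> * (f (xs 0) - Inf (range f)) + G
    + (1 + S / \<delta>) * l * (norm (w 0))\<^sup>2"
proof -
  obtain c0 where "c0 \<in> C" using C(2) by blast
  then have bdd: "bdd_below (range f)" using C(1) by (auto intro: bdd_belowI2)
  define M where "M = (LEAST n. norm (w n) \<le> \<delta>)"
  have M: "norm (w M) \<le> \<delta>"
    unfolding M_def by (rule LeastI_ex[OF exists_small_subgradient[OF bdd \<delta>]])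
  have large: "\<delta> < norm (w n)" if "n < M" for n
    using not_less_Least[OF that[unfolded M_def]] by simp
  have fejer: "norm (xs n - c) \<le> norm (xs 0 - c)" if "c \<in> C" for n c
    using fejer_monotone[of c n] that C(1) by simp
  have "infdist (xs n) C \<le> 1 * infdist (xs 0) C + 0" for n
    using fejer infdist_le[of _ C "xs n"] C(2)
    by (intro le_mult_infdist) (auto simp: dist_norm intro: order_trans)
  then have slopes: "slope g (xs n) \<le> slope f (xs n) + S" for n
    using slope_gap[of "xs n"] by simp
  have "g (xs 0) - f (xs 0) \<le> (g (xs M) - f (xs M)) + S / \<delta> * (f (xs 0) - f (xs M))
    + (1 + S / \<delta>) * l * norm (w 0) * (norm (w 0) - norm (w M))"
    by (rule gap_telescope[OF g slopes S \<delta> large])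
  moreover have "g (xs M) - f (xs M) \<le> (S + \<delta>) * infdist (xs 0) C + G"
  proof (rule gap_le_of_slope_le[OF g _ C(2) _ fejer G])
    show "slope g (xs M) \<le> S + \<delta>"
      using slopes[of M] slope_le_norm[OF subgradient, of M] M by linarith
  qed (use C(1) in auto)
  moreover have "S / \<delta> * (f (xs 0) - f (xs M)) \<le> S / \<delta> * (f (xs 0) - Inf (range f))"
    using bdd S \<delta> by (intro mult_left_mono) (auto simp: cInf_lower)
  moreover have "(1 + S / \<delta>) * l * norm (w 0) * (norm (w 0) - norm (w M))
      \<le> (1 + S / \<delta>) * l * norm (w 0) * norm (w 0)"
    using S \<delta> step_pos by (intro mult_left_mono) auto
  ultimately show ?thesis by (simp add: power2_eq_square)
qed

end

lemma convex_gap_bound: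
  fixes f g :: "'a::{real_inner,complete_space} \<Rightarrow> real"
  assumes f: "convex_on UNIV f" "continuous_on UNIV f"
    and g: "convex_on UNIV g" "continuous_on UNIV g"
    and C: "C = {z. \<forall>y. f z \<le> f y}" "C \<noteq> {}" and x: "infdist x C \<le> r"
    and \<delta>: "0 < \<delta>" and S: "0 \<le> S"
    and slope_gap: "\<And>u. infdist u C \<le> r \<Longrightarrow> slope g u - slope f u \<le> S"
    and G: "\<And>c. c \<in> C \<Longrightarrow> g c - f c \<le> G"
  shows "g x - f x \<le> (S + \<delta>) * infdist x C + S / \<delta> * (f x - Inf (range f)) + G"
proof -
  obtain c0 where "c0 \<in> C" using C(2) by blast
  then have bdd: "bdd_below (range f)" using C(1) by (auto intro: bdd_belowI2)
  obtain u0 where u0: "u0 \<in> subdiff f x" using subdiff_nonempty[OF f] by blast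
  define K where "K = (1 + S / \<delta>) * (norm u0)\<^sup>2"
  have approx: "g x - f x \<le> (S + \<delta>) * infdist x C + S / \<delta> * (f x - Inf (range f)) + G + K * l"
    if l: "0 < l" for l
  proof -
    obtain P where P: "\<And>a. (1/l) *\<^sub>R (a - P a) \<in> subdiff f (P a)"
      using prox_map_exists[OF f bdd l] by blast
    define xs where "xs n = (P ^^ n) x" for n
    define w where "w n = (case n of 0 \<Rightarrow> u0 | Suc m \<Rightarrow> (1/l) *\<^sub>R (xs m - xs n))" for n
    interpret proximal_sequence f l xs w
      by unfold_locales (use l u0 P in \<open>auto simp: xs_def w_def split: nat.split\<close>)
    have "xs 0 = x" "w 0 = u0" by (simp_all add: xs_def w_def)
    moreover have "slope g u - slope f u \<le> S" if "infdist u C \<le> infdist x C" for u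
      using slope_gap that x by simp
    ultimately show ?thesis
      using gap_estimate[OF subdiff_nonempty[OF g] C \<delta> S _ G] unfolding K_def by (simp add: mult_ac)
  qed
  show ?thesis
  proof (rule field_le_epsilon)
    fix e :: real assume e: "0 < e"
    have "0 \<le> K" unfolding K_def using S \<delta> by simp
    then have "K * (e / (K + 1)) \<le> e"
      using e by (simp add: field_simps)
    then show "g x - f x \<le> (S + \<delta>) * infdist x C + S / \<delta> * (f x - Inf (range f)) + G + e"
      using approx[of "e / (K + 1)"] e \<open>0 \<le> K\<close> by fastforce
  qed
qed

lemma closed_argmin:
  fixes f :: "'a::topological_space \<Rightarrow> 'b::linorder_topology"
  assumes "continuous_on UNIV f"
  shows "closed {z. \<forall>y. f z \<le> f y}"
  using assms by (intro closed_Collect_all closed_Collect_le continuous_on_const)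

lemma Inf_range_eq_min: "\<forall>y. f c \<le> f y \<Longrightarrow> Inf (range f) = (f c :: real)"
  by (intro cInf_eq_minimum) auto

lemma possup_upper: "x \<in> U \<Longrightarrow> ereal (w x) \<le> possup w U"
  unfolding possup_def by (rule order_trans[OF _ SUP_upper]) auto

lemma possup_nonneg:
  assumes "x \<in> U"
  shows "0 \<le> possup w U"
proof -
  have "0 \<le> ereal (max (w x) 0)" by (simp add: zero_ereal_def)
  also have "\<dots> \<le> possup w U" unfolding possup_def using assms by (rule SUP_upper)
  finally show ?thesis .
qed

lemma possup_eq_ereal_upper: "possup w U = ereal S \<Longrightarrow> x \<in> U \<Longrightarrow> w x \<le> S"
  using possup_upper[of x U w] by simp

text \<open>In ereal, \<infinity> * 0 = 0, so for d = 0 an infinite slope gap does not dominate; this case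
  needs the separate hypothesis.\<close>

lemma ereal_affine_bound:
  fixes Se Ge :: ereal
  assumes "0 \<le> Se" "0 \<le> Ge" "0 < \<delta>" "0 \<le> d" "0 \<le> e"
    and "d = 0 \<Longrightarrow> e = 0 \<and> ereal X \<le> Ge"
    and "\<And>S G. Se = ereal S \<Longrightarrow> Ge = ereal G \<Longrightarrow> 0 \<le> S \<Longrightarrow>
      X \<le> (S + \<delta>) * d + S / \<delta> * e + G"
  shows "ereal X \<le> (Se + ereal \<delta>) * ereal d + Se / ereal \<delta> * ereal e + Ge"
proof (cases "d = 0")
  case True
  then show ?thesis using assms(6) by (simp flip: zero_ereal_def)
next
  case False
  then show ?thesis using assms by (cases Se; cases Ge) (auto simp: ereal_mult_divide)
qed

theorem mainTheorem4:
  fixes f g :: "'a::{real_inner, complete_space} \<Rightarrow> real" and r \<delta> :: real and x :: 'a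
  assumes "convex_on UNIV f" "continuous_on UNIV f"
    and "convex_on UNIV g" "continuous_on UNIV g"
    and "{z. \<forall>y. f z \<le> f y} \<noteq> {}"
    and "r > 0"
    and "infdist x {z. \<forall>y. f z \<le> f y} \<le> r"
    and "\<delta> > 0"
  shows "ereal (g x - f x) \<le>
     (possup (\<lambda>z. slope g z - slope f z) {u. infdist u {z. \<forall>y. f z \<le> f y} \<le> r} + ereal \<delta>)
        * ereal (infdist x {z. \<forall>y. f z \<le> f y})
     + possup (\<lambda>z. slope g z - slope f z) {u. infdist u {z. \<forall>y. f z \<le> f y} \<le> r} / ereal \<delta>
        * ereal (f x - Inf (range f))
     + possup (\<lambda>z. g z - f z) {z. \<forall>y. f z \<le> f y}"
proof -
  define C where "C = {z. \<forall>y. f z \<le> f y}"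
  obtain c where c: "c \<in> C" using assms(5) unfolding C_def by blast
  then have f_min: "Inf (range f) = f c" unfolding C_def by (simp add: Inf_range_eq_min)
  have x: "x \<in> {u. infdist u C \<le> r}" using assms(7) unfolding C_def by simp
  have argmin_case: "f x - Inf (range f) = 0 \<and> ereal (g x - f x) \<le> possup (\<lambda>z. g z - f z) C"
    if "infdist x C = 0"
  proof -
    have "x \<in> C"
      using in_closed_iff_infdist_zero[OF closed_argmin[OF assms(2)], of x] assms(5) that
      unfolding C_def by simp
    then show ?thesis
      using c f_min possup_upper[of x C "\<lambda>z. g z - f z"] unfolding C_def by (simp add: antisym)
  qed
  have gap_case: "g x - f x \<le> (S + \<delta>) * infdist x C + S / \<delta> * (f x - Inf (range f)) + G"
    if S: "possup (\<lambda>z. slope g z - slope f z) {u. infdist u C \<le> r} = ereal S"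
      and G: "possup (\<lambda>z. g z - f z) C = ereal G" and "0 \<le> S" for S G
  proof (rule convex_gap_bound[OF assms(1-4) C_def _ _ assms(8) \<open>0 \<le> S\<close>])
    show "C \<noteq> {}" "infdist x C \<le> r" using c x by auto
    show "slope g u - slope f u \<le> S" if "infdist u C \<le> r" for u
      using possup_eq_ereal_upper[OF S] that by simp
    show "g z - f z \<le> G" if "z \<in> C" for z
      using possup_eq_ereal_upper[OF G that] .
  qed
  have "0 \<le> f x - Inf (range f)" using c f_min unfolding C_def by simp
  from ereal_affine_bound[OF possup_nonneg[OF x] possup_nonneg[OF c] assms(8) infdist_nonneg
      this argmin_case gap_case]
  show ?thesis unfolding C_def .
qed

end
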